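(* Let $F=\langle f_1,\ldots,f_k\rangle$ be a normalized solution to an instance $(\mathcal{T}_{initial},\mathcal{T}_{final},k)$ of Flip Distance, and let $C$ be a component of $\mathcal{D}_F$. Let $f_i$ and $f_h$, with $i<h$, be two flips in $C$ such that $\phi(f_h)=\epsilon(f_i)$ and $\epsilon(f_i)$ is not flipped between $f_i$ and $f_h$ (i.e., there is no $p$ with $i<p<h$ and $\epsilon(f_p)=\epsilon(f_i)$). Then there is a directed path from $f_i$ to $f_h$ in $C$.
   Context: A triangulation of a finite point set $\mathcal{P}$ in the plane is a partition of the convex hull of $\mathcal{P}$ into triangles whose vertex set is $\mathcal{P}$. For an interior edge $e$ of a triangulation $\mathcal{T}$, the quadrilateral associated with $e$ is the union of the two triangles of $\mathcal{T}$ sharing $e$. A flip $f$ with underlying edge $\epsilon(f)=e$ is admissible in $\mathcal{T}$ if $e\in\mathcal{T}$ and its associated quadrilateral is convex; performing it replaces $e$ by the other diagonal $\phi(f)$ of that quadrilateral. Two distinct edges share a triangle in $\mathcal{T}$ if they are edges of the same triangle of $\mathcal{T}$. A sequence $F=\langle f_1,\ldots,f_r\rangle$ is valid with respect to $\mathcal{T}$ if there are triangulations $\mathcal{T}_0=\mathcal{T},\mathcal{T}_1,\ldots,\mathcal{T}_r$ such that $f_i$ is admissible in $\mathcal{T}_{i-1}$ and performing it yields $\mathcal{T}_i$; then we write $\mathcal{T}\xrightarrow{F}\mathcal{T}_r$. Flips in a sequence are distinct objects even if they have the same underlying edge. For $1\le i<j\le r$, flip $f_j$ is adjacent to $f_i$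 (written $f_i\to f_j$) if (1) either $\phi(f_i)=\epsilon(f_j)$ or $\phi(f_i)$ and $\epsilon(f_j)$ share a triangle in $\mathcal{T}_{j-1}$, and (2) there is no $p$ with $i<p<j$ and $\epsilon(f_p)=\phi(f_i)$. $\mathcal{D}_F$ is the directed acyclic graph whose nodes are the flips of $F$ and whose arcs are the pairs $f_i\to f_j$; a component of it is a weakly connected component. The flip distance between two triangulations is the minimum length of a valid sequence transforming one into the other. An instance $(\mathcal{T}_{initial},\mathcal{T}_{final},k)$ of Flip Distance consists of two triangulations of $\mathcal{P}$ and $k\in\mathbb{N}$; a solution is a valid sequence $F$ of length $k$ with $\mathcal{T}_{initial}\xrightarrow{F}\mathcal{T}_{final}$, where $k$ is the flip distance between them. For a solution $F=\langle f_1,\ldots,f_k\rangle$, $\mathcal{T}_j$ denotes the outcome of applying $\langle f_1,\ldots,f_j\rangle$ to $\mathcal{T}_{initial}$. A changed edge is an edge of $\mathcal{T}_{initial}$ not in $\mathcal{T}_{final}$; a component of $\mathcal{D}_F$ is essential if it contains a flip whose underlying edge is a changed edge. A solution $F$ is normalized if every component of $\mathcal{D}_F$ is essential and the flips of each component of $\mathcal{D}_F$ appear as a consecutive block in $F$. *)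

theory Defs
  imports "HOL-Analysis.Analysis"
begin

type_synonym pt = "real \<times> real"
type_synonym edge = "pt set"          (* a 2-element set of points *)
type_synonym triangle = "pt set"      (* a 3-element set of points *)
type_synonym triangulation = "pt set set"

definition is_triangulation :: "pt set \<Rightarrow> triangulation \<Rightarrow> bool" where
  "is_triangulation P T \<longleftrightarrow>
     finite P \<and>
     (\<forall>t\<in>T. t \<subseteq> P \<and> card t = 3 \<and> \<not> affine_dependent t) \<and>
     \<Union> ((\<lambda>t. convex hull t) ` T) = convex hull P \<and>
     (\<forall>t1\<in>T. \<forall>t2\<in>T. t1 \<noteq> t2 \<longrightarrow>
         convex hull t1 \<inter> convex hull t2 = convex hull (t1 \<inter> t2)) \<and>
     \<Union> T = P"

definition edges :: "triangulation \<Rightarrow> edge set" where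
  "edges T = {e. card e = 2 \<and> (\<exists>t\<in>T. e \<subseteq> t)}"

definition convex_quad :: "triangle \<Rightarrow> triangle \<Rightarrow> bool" where
  "convex_quad t1 t2 \<longleftrightarrow>
     card (t1 \<union> t2) = 4 \<and>
     (\<forall>p \<in> t1 \<union> t2. p \<notin> convex hull ((t1 \<union> t2) - {p})) \<and>
     convex (convex hull t1 \<union> convex hull t2)"

definition admissible :: "triangulation \<Rightarrow> edge \<Rightarrow> bool" where
  "admissible T e \<longleftrightarrow> e \<in> edges T \<and>
     (\<exists>t1\<in>T. \<exists>t2\<in>T. t1 \<noteq> t2 \<and> e \<subseteq> t1 \<and> e \<subseteq> t2 \<and> convex_quad t1 t2)"

text \<open>The other diagonal of the quadrilateral associated with e (phi of the flip).\<close>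
definition other_diag :: "triangulation \<Rightarrow> edge \<Rightarrow> edge" where
  "other_diag T e = \<Union> {t\<in>T. e \<subseteq> t} - e"

definition do_flip :: "triangulation \<Rightarrow> edge \<Rightarrow> triangulation" where
  "do_flip T e = {t\<in>T. \<not> e \<subseteq> t} \<union> (\<lambda>a. insert a (other_diag T e)) ` e"

text \<open>Flip sequences are lists of underlying edges: flip f_i (1-based) has underlying edge F!(i-1).
  Tr T F j is the triangulation T_j after performing the first j flips.\<close>
definition Tr :: "triangulation \<Rightarrow> edge list \<Rightarrow> nat \<Rightarrow> triangulation" where
  "Tr T F j = fold (\<lambda>e T'. do_flip T' e) (take j F) T"

definition eps :: "edge list \<Rightarrow> nat \<Rightarrow> edge" where
  "eps F i = F ! (i - 1)"

definition phi :: "triangulation \<Rightarrow> edge list \<Rightarrow> nat \<Rightarrow> edge" where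
  "phi T F i = other_diag (Tr T F (i - 1)) (eps F i)"

definition valid_seq :: "pt set \<Rightarrow> triangulation \<Rightarrow> edge list \<Rightarrow> bool" where
  "valid_seq P T F \<longleftrightarrow>
     (\<forall>j \<le> length F. is_triangulation P (Tr T F j)) \<and>
     (\<forall>i \<in> {1..length F}. admissible (Tr T F (i - 1)) (eps F i))"

definition is_flip_distance :: "pt set \<Rightarrow> triangulation \<Rightarrow> triangulation \<Rightarrow> nat \<Rightarrow> bool" where
  "is_flip_distance P T1 T2 k \<longleftrightarrow>
     (\<exists>F. valid_seq P T1 F \<and> length F = k \<and> Tr T1 F k = T2) \<and>
     (\<forall>F. valid_seq P T1 F \<and> Tr T1 F (length F) = T2 \<longrightarrow> k \<le> length F)"

definition is_solution :: "pt set \<Rightarrow> triangulation \<Rightarrow> triangulation \<Rightarrow> nat \<Rightarrow> edge list \<Rightarrow> bool" where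
  "is_solution P Ti Tf k F \<longleftrightarrow>
     is_triangulation P Ti \<and> is_triangulation P Tf \<and>
     valid_seq P Ti F \<and> length F = k \<and> Tr Ti F k = Tf \<and> is_flip_distance P Ti Tf k"

definition share_triangle :: "triangulation \<Rightarrow> edge \<Rightarrow> edge \<Rightarrow> bool" where
  "share_triangle T e1 e2 \<longleftrightarrow> e1 \<noteq> e2 \<and> card e1 = 2 \<and> card e2 = 2 \<and>
     (\<exists>t\<in>T. e1 \<subseteq> t \<and> e2 \<subseteq> t)"

text \<open>Arc f_i -> f_j of the DAG D_F (1-based indices).\<close>
definition adjacent :: "triangulation \<Rightarrow> edge list \<Rightarrow> nat \<Rightarrow> nat \<Rightarrow> bool" where
  "adjacent T F i j \<longleftrightarrow> 1 \<le> i \<and> i < j \<and> j \<le> length F \<and>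
     (phi T F i = eps F j \<or> share_triangle (Tr T F (j - 1)) (phi T F i) (eps F j)) \<and>
     \<not> (\<exists>p. i < p \<and> p < j \<and> eps F p = phi T F i)"

definition arcs :: "triangulation \<Rightarrow> edge list \<Rightarrow> (nat \<times> nat) set" where
  "arcs T F = {(i, j). adjacent T F i j}"

definition components :: "triangulation \<Rightarrow> edge list \<Rightarrow> nat set set" where
  "components T F = {C. \<exists>i \<in> {1..length F}.
      C = {j \<in> {1..length F}. (i, j) \<in> (arcs T F \<union> (arcs T F)\<inverse>)\<^sup>*}}"

definition changed_edge :: "triangulation \<Rightarrow> triangulation \<Rightarrow> edge \<Rightarrow> bool" where
  "changed_edge Ti Tf e \<longleftrightarrow> e \<in> edges Ti \<and> e \<notin> edges Tf"

definition essential :: "triangulation \<Rightarrow> triangulation \<Rightarrow> edge list \<Rightarrow> nat set \<Rightarrow> bool" where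
  "essential Ti Tf F C \<longleftrightarrow> (\<exists>i\<in>C. changed_edge Ti Tf (eps F i))"

definition normalized :: "triangulation \<Rightarrow> triangulation \<Rightarrow> edge list \<Rightarrow> bool" where
  "normalized Ti Tf F \<longleftrightarrow>
     (\<forall>C \<in> components Ti F. essential Ti Tf F C \<and> (\<exists>a b. C = {a..b}))"

end

theory Submission
  imports Defs
begin

text \<open>Let \<open>e = \<epsilon>(f\<^sub>i)\<close>. Every edge of \<open>T\<^sub>j\<close>, \<open>i \<le> j < h\<close>, that crosses \<open>e\<close> was created by a
  flip reachable from \<open>f\<^sub>i\<close> in \<open>C\<close> and not flipped since. No edge of \<open>T\<^sub>i\<^sub>-\<^sub>1\<close> crosses \<open>e\<close>, so
  after \<open>f\<^sub>i\<close> the only crossing edge is \<open>\<phi>(f\<^sub>i)\<close>. When a later flip \<open>f\<^sub>q\<close> creates a diagonal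
  crossing \<open>e\<close>, the segment \<open>e\<close>, which contains no further point of \<open>P\<close> and is not \<open>\<epsilon>(f\<^sub>q)\<close>,
  leaves the convex quadrilateral of \<open>f\<^sub>q\<close> through a side or crosses \<open>\<epsilon>(f\<^sub>q)\<close>; that edge
  crosses \<open>e\<close>, so by induction it was created by a flip reachable from \<open>f\<^sub>i\<close>, and since it
  shares a triangle with \<open>\<epsilon>(f\<^sub>q)\<close> (or equals it) that flip is adjacent to \<open>f\<^sub>q\<close>. Finally
  \<open>\<phi>(f\<^sub>h) = e\<close>, so \<open>\<epsilon>(f\<^sub>h)\<close> is an edge of \<open>T\<^sub>h\<^sub>-\<^sub>1\<close> crossing \<open>e\<close>, and its creator is
  adjacent to \<open>f\<^sub>h\<close>.\<close>

section \<open>Crossing edges of a triangulation\<close>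

definition crosses :: "edge \<Rightarrow> edge \<Rightarrow> bool" where
  "crosses e x \<longleftrightarrow> e \<inter> x = {} \<and> convex hull e \<inter> convex hull x \<noteq> {}"

lemma crosses_sym: "crosses e x \<Longrightarrow> crosses x e"
  unfolding crosses_def by blast

lemma affine_independent_hull_Int_subset:
  fixes S :: "'a::euclidean_space set"
  assumes "\<not> affine_dependent S" "A \<subseteq> S" "B \<subseteq> S"
  shows "convex hull A \<inter> convex hull B \<subseteq> convex hull (A \<inter> B)"
proof -
  have "\<not> affine_dependent (A \<union> B)"
    using assms affine_dependent_subset by (metis Un_least)
  then show ?thesis using convex_hull_Int by blast
qed

lemma affine_independent_vertex_in_hull:
  fixes S :: "'a::euclidean_space set"
  assumes "\<not> affine_dependent S" "p \<in> S" "A \<subseteq> S" "p \<in> convex hull A"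
  shows "p \<in> A"
proof -
  have "p \<in> convex hull ({p} \<inter> A)"
    using affine_independent_hull_Int_subset[OF assms(1), of "{p}" A] assms(2-4)
    by (auto intro: hull_inc)
  then show ?thesis by (cases "p \<in> A") auto
qed

lemma triangulation_triangleD:
  assumes "is_triangulation P T" "t \<in> T"
  shows "t \<subseteq> P" "card t = 3" "\<not> affine_dependent t"
proof -
  have "\<forall>t\<in>T. t \<subseteq> P \<and> card t = 3 \<and> \<not> affine_dependent t"
    using assms(1) unfolding is_triangulation_def by (elim conjE)
  then show "t \<subseteq> P" "card t = 3" "\<not> affine_dependent t" using assms(2) by auto
qed

lemma triangulation_hull_Int:
  assumes "is_triangulation P T" "t1 \<in> T" "t2 \<in> T" "t1 \<noteq> t2"
  shows "convex hull t1 \<inter> convex hull t2 = convex hull (t1 \<inter> t2)"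
proof -
  have "\<forall>t1\<in>T. \<forall>t2\<in>T. t1 \<noteq> t2 \<longrightarrow> convex hull t1 \<inter> convex hull t2 = convex hull (t1 \<inter> t2)"
    using assms(1) unfolding is_triangulation_def by (elim conjE)
  then show ?thesis using assms(2-4) by blast
qed

lemma triangulation_vertexE:
  assumes "is_triangulation P T" "p \<in> P"
  obtains t where "t \<in> T" "p \<in> t"
proof -
  have "\<Union> T = P" using assms(1) unfolding is_triangulation_def by (elim conjE)
  then show ?thesis using assms(2) that by blast
qed

text \<open>Proper intersection of triangles forbids points of \<open>P\<close> on the faces of other triangles.\<close>

lemma triangulation_point_in_hull_face:
  assumes T: "is_triangulation P T" and t: "t \<in> T" and s: "s \<subseteq> t"
    and p: "p \<in> P" "p \<in> convex hull s"
  shows "p \<in> s"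
proof -
  obtain t' where t': "t' \<in> T" "p \<in> t'" using triangulation_vertexE[OF T p(1)] .
  have pt: "p \<in> convex hull t" using p(2) hull_mono[OF s] by blast
  have "p \<in> convex hull (t \<inter> t')"
  proof (cases "t' = t")
    case True then show ?thesis using t' by (simp add: hull_inc)
  next
    case False
    then show ?thesis
      using triangulation_hull_Int[OF T t t'(1)] pt t'(2) hull_inc[of p t'] by blast
  qed
  then have "p \<in> t \<inter> t'"
    using affine_independent_vertex_in_hull[OF triangulation_triangleD(3)[OF T t'(1)] t'(2)] by blast
  then show ?thesis
    using affine_independent_vertex_in_hull[OF triangulation_triangleD(3)[OF T t] _ s p(2)] by blast
qed

lemma triangulation_edge_hull_points:
  assumes "is_triangulation P T" "e \<in> edges T"
  shows "P \<inter> convex hull e \<subseteq> e"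
proof
  fix p assume "p \<in> P \<inter> convex hull e"
  moreover obtain t where "t \<in> T" "e \<subseteq> t" using assms(2) unfolding edges_def by blast
  ultimately show "p \<in> e" using triangulation_point_in_hull_face[OF assms(1)] by blast
qed

lemma triangulation_edges_not_crosses:
  assumes T: "is_triangulation P T" and x: "x \<in> edges T" and y: "y \<in> edges T"
  shows "\<not> crosses x y"
proof
  assume "crosses x y"
  then obtain z where z: "z \<in> convex hull x" "z \<in> convex hull y" and dj: "x \<inter> y = {}"
    unfolding crosses_def by blast
  from x obtain t1 where t1: "t1 \<in> T" "x \<subseteq> t1" "card x = 2" unfolding edges_def by blast
  from y obtain t2 where t2: "t2 \<in> T" "y \<subseteq> t2" "card y = 2" unfolding edges_def by blast
  note ind1 = triangulation_triangleD(3)[OF T t1(1)] and ind2 = triangulation_triangleD(3)[OF T t2(1)]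
  show False
  proof (cases "t1 = t2")
    case True
    have "finite x" "finite y" using t1(3) t2(3) by (auto intro: card_ge_0_finite)
    then have "card (x \<union> y) = 4" using dj t1(3) t2(3) by (subst card_Un_disjoint) auto
    moreover have "card (x \<union> y) \<le> card t1"
      using True t1 t2 triangulation_triangleD(2)[OF T t1(1)]
      by (intro card_mono) (auto intro: card_ge_0_finite)
    ultimately show False using triangulation_triangleD(2)[OF T t1(1)] by simp
  next
    case False
    have "z \<in> convex hull (t1 \<inter> t2)"
      using triangulation_hull_Int[OF T t1(1) t2(1) False] z hull_mono[OF t1(2)] hull_mono[OF t2(2)]
      by blast
    then have "z \<in> convex hull (x \<inter> (t1 \<inter> t2))"
      using affine_independent_hull_Int_subset[OF ind1, of x "t1 \<inter> t2"] z t1(2) by blast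
    then have "z \<in> convex hull (y \<inter> (x \<inter> (t1 \<inter> t2)))"
      using affine_independent_hull_Int_subset[OF ind2, of y "x \<inter> (t1 \<inter> t2)"] z t2(2) by blast
    moreover have "y \<inter> (x \<inter> (t1 \<inter> t2)) = {}" using dj by blast
    ultimately show False by simp
  qed
qed

section \<open>A segment leaving a convex quadrilateral\<close>

lemma convex_hull_2_memI:
  "0 \<le> s \<Longrightarrow> 0 \<le> t \<Longrightarrow> s + t = 1 \<Longrightarrow> s *\<^sub>R x + t *\<^sub>R y \<in> convex hull {x, y}"
  unfolding convex_hull_2 by blast

lemma convex_hull_3_memI:
  "0 \<le> r \<Longrightarrow> 0 \<le> s \<Longrightarrow> 0 \<le> t \<Longrightarrow> r + s + t = 1 \<Longrightarrow>
    r *\<^sub>R x + s *\<^sub>R y + t *\<^sub>R z \<in> convex hull {x, y, z}"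
  unfolding convex_hull_3 by blast

lemma in_convex_hull_2_iff:
  "x \<in> convex hull {u, v} \<longleftrightarrow> (\<exists>s. 0 \<le> s \<and> s \<le> 1 \<and> x = u + s *\<^sub>R (v - u))"
  by (auto simp: convex_hull_2_alt)

lemma midpoint_in_triangle_imp_hull_meet:
  fixes a b c c' :: "'a::real_vector"
  assumes m: "(1/2) *\<^sub>R (c + c') \<in> convex hull {a, b, c}" and nc: "c' \<notin> convex hull {a, b, c}"
  shows "convex hull {a, b} \<inter> convex hull {c, c'} \<noteq> {}"
proof -
  obtain \<alpha> \<beta> \<gamma> where co: "0 \<le> \<alpha>" "0 \<le> \<beta>" "0 \<le> \<gamma>" "\<alpha> + \<beta> + \<gamma> = 1"
    and meq: "(1/2) *\<^sub>R (c + c') = \<alpha> *\<^sub>R a + \<beta> *\<^sub>R b + \<gamma> *\<^sub>R c"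
    using m unfolding convex_hull_3 by blast
  have c'eq: "c' = (2*\<alpha>) *\<^sub>R a + (2*\<beta>) *\<^sub>R b + (2*\<gamma> - 1) *\<^sub>R c"
  proof -
    have "c + c' = 2 *\<^sub>R ((1/2) *\<^sub>R (c + c'))" by simp
    also have "\<dots> = 2 *\<^sub>R (\<alpha> *\<^sub>R a + \<beta> *\<^sub>R b + \<gamma> *\<^sub>R c)" using meq by simp
    finally show ?thesis by (simp add: algebra_simps)
  qed
  have g: "\<gamma> < 1/2"
  proof (rule ccontr)
    assume "\<not> \<gamma> < 1/2"
    then have "c' \<in> convex hull {a, b, c}"
      unfolding c'eq using co by (intro convex_hull_3_memI) auto
    then show False using nc by simp
  qed
  define q where "q = (\<alpha>/(1-\<gamma>)) *\<^sub>R a + (\<beta>/(1-\<gamma>)) *\<^sub>R b"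
  have s1: "\<alpha> + \<beta> = 1 - \<gamma>" "1 - \<gamma> > 0" using co g by auto
  have qab: "q \<in> convex hull {a, b}"
    unfolding q_def using co s1
    by (intro convex_hull_2_memI) (simp_all add: add_divide_distrib[symmetric])
  define r where "r = (1/(2-2*\<gamma>)) *\<^sub>R c' + ((1-2*\<gamma>)/(2-2*\<gamma>)) *\<^sub>R c"
  have "(2*(1-\<gamma>)) *\<^sub>R q = (2*(1-\<gamma>)) *\<^sub>R r"
  proof -
    have k: "(2 - 2*\<gamma>) * x / (1-\<gamma>) = 2 * x" for x using s1 by (simp add: field_simps)
    have "(2*(1-\<gamma>)) *\<^sub>R q = (2*\<alpha>) *\<^sub>R a + (2*\<beta>) *\<^sub>R b"
      unfolding q_def using s1 by (simp add: scaleR_add_right k)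
    also have "\<dots> = c' + (1-2*\<gamma>) *\<^sub>R c" unfolding c'eq by (simp add: algebra_simps)
    also have "\<dots> = (2*(1-\<gamma>)) *\<^sub>R r" unfolding r_def using s1 by (simp add: scaleR_add_right)
    finally show ?thesis .
  qed
  then have "q = r" using s1 by simp
  moreover have "r \<in> convex hull {c', c}"
    unfolding r_def using g s1
    by (intro convex_hull_2_memI) (simp_all add: add_divide_distrib[symmetric])
  ultimately show ?thesis using qab by (auto simp: insert_commute)
qed

lemma convex_quad_diagonals_cross:
  fixes a b c c' :: pt
  assumes Q: "convex_quad {a, b, c} {a, b, c'}" and "c \<noteq> c'" "c \<notin> {a, b}" "c' \<notin> {a, b}"
  shows "crosses {c, c'} {a, b}"
proof -
  have "({a, b, c} \<union> {a, b, c'}) - {c'} = {a, b, c}" "({a, b, c} \<union> {a, b, c'}) - {c} = {a, b, c'}"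
    using assms(2-4) by auto
  moreover have "c \<in> {a, b, c} \<union> {a, b, c'}" "c' \<in> {a, b, c} \<union> {a, b, c'}" by simp_all
  ultimately have n1: "c' \<notin> convex hull {a, b, c}" and n2: "c \<notin> convex hull {a, b, c'}"
    using Q unfolding convex_quad_def by (elim conjE, metis)+
  have "(1/2) *\<^sub>R c + (1/2) *\<^sub>R c' \<in> convex hull {a, b, c} \<union> convex hull {a, b, c'}"
    using Q unfolding convex_quad_def by (intro convexD) (auto intro: hull_inc)
  then consider "(1/2) *\<^sub>R (c + c') \<in> convex hull {a, b, c}"
    | "(1/2) *\<^sub>R (c' + c) \<in> convex hull {a, b, c'}"
    by (auto simp: scaleR_add_right add.commute)
  then show ?thesis
  proof cases
    case 1
    then show ?thesis
      using midpoint_in_triangle_imp_hull_meet[OF _ n1] assms(3,4) unfolding crosses_def by blast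
  next
    case 2
    then show ?thesis
      using midpoint_in_triangle_imp_hull_meet[OF _ n2] assms(3,4) unfolding crosses_def
      by (auto simp: insert_commute)
  qed
qed

definition leaves_at :: "'a::real_vector \<Rightarrow> 'a \<Rightarrow> 'a set \<Rightarrow> real \<Rightarrow> bool" where
  "leaves_at u v Q \<beta> \<longleftrightarrow> 0 < \<beta> \<and> \<beta> < 1 \<and> u + \<beta> *\<^sub>R (v - u) \<in> Q \<and>
     (\<forall>s. \<beta> < s \<and> s \<le> 1 \<longrightarrow> u + s *\<^sub>R (v - u) \<notin> Q)"

lemma leaves_atE:
  fixes u v :: "'a::real_normed_vector"
  assumes Q: "closed Q" and t0: "0 < t0" "t0 \<le> 1" "u + t0 *\<^sub>R (v - u) \<in> Q" and v: "v \<notin> Q"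
  obtains \<beta> where "leaves_at u v Q \<beta>"
proof -
  define p where "p = (\<lambda>s::real. u + s *\<^sub>R (v - u))"
  define J where "J = {0..1} \<inter> p -` Q"
  have "closed (p -` Q)"
    using Q unfolding p_def by (intro closed_vimage continuous_intros) auto
  then have "compact J" unfolding J_def by (intro compact_Int_closed) auto
  moreover have "t0 \<in> J" unfolding J_def p_def using t0 by auto
  ultimately obtain \<beta> where \<beta>: "\<beta> \<in> J" "\<forall>s\<in>J. s \<le> \<beta>" using compact_attains_sup by blast
  have "p 1 = v" unfolding p_def by simp
  then have "\<beta> \<noteq> 1" using \<beta>(1) v unfolding J_def by auto
  moreover have "t0 \<le> \<beta>" using \<beta> \<open>t0 \<in> J\<close> by blast
  moreover have "u + s *\<^sub>R (v - u) \<notin> Q" if "\<beta> < s" "s \<le> 1" for s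
  proof
    assume "u + s *\<^sub>R (v - u) \<in> Q"
    then have "s \<in> J" using that \<open>t0 \<le> \<beta>\<close> t0(1) unfolding J_def p_def by auto
    then show False using \<beta>(2) that(1) by fastforce
  qed
  ultimately have "leaves_at u v Q \<beta>"
    using \<beta>(1) t0(1) unfolding leaves_at_def J_def p_def by fastforce
  then show ?thesis by (rule that)
qed

lemma leaves_at_not_interior:
  fixes u v :: "'a::real_normed_vector"
  assumes "leaves_at u v Q \<beta>" "u \<noteq> v"
  shows "u + \<beta> *\<^sub>R (v - u) \<notin> interior Q"
proof
  define w where "w = u + \<beta> *\<^sub>R (v - u)"
  assume "w \<in> interior Q"
  then obtain e where e: "e > 0" "ball w e \<subseteq> Q" using mem_interior by blast
  define n where "n = norm (v - u)"
  have n: "n > 0" using assms(2) unfolding n_def by simp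
  have b: "0 < \<beta>" "\<beta> < 1" using assms(1) unfolding leaves_at_def by auto
  define d where "d = min (1 - \<beta>) (e / (2 * n))"
  have d: "0 < d" "d \<le> 1 - \<beta>" "d \<le> e / (2 * n)" using b e n unfolding d_def by auto
  have "u + (\<beta> + d) *\<^sub>R (v - u) = w + d *\<^sub>R (v - u)" unfolding w_def by (simp add: algebra_simps)
  then have "dist w (u + (\<beta> + d) *\<^sub>R (v - u)) = d * n" unfolding n_def using d by (simp add: dist_norm)
  also have "\<dots> < e" using d n e by (simp add: field_simps)
  finally have "u + (\<beta> + d) *\<^sub>R (v - u) \<in> Q" using e by auto
  then show False using assms(1) d unfolding leaves_at_def by auto
qed

lemma ray_beyond_segment_point:
  fixes x y v w :: "'a::real_vector"
  assumes w: "w = x + \<beta> *\<^sub>R (v - x)" "w \<in> convex hull {x, y}" "w \<noteq> x" "w \<noteq> y"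
    and b: "0 < \<beta>" "\<beta> < 1"
  obtains s where "\<beta> < s" "s \<le> 1" "x + s *\<^sub>R (v - x) \<in> convex hull {x, y}"
proof -
  obtain \<mu> where mu: "0 \<le> \<mu>" "\<mu> \<le> 1" "w = x + \<mu> *\<^sub>R (y - x)"
    using w(2) in_convex_hull_2_iff by blast
  have m: "0 < \<mu>" "\<mu> < 1" using mu w(3,4) by (auto simp: le_less)
  have eq: "\<beta> *\<^sub>R (v - x) = \<mu> *\<^sub>R (y - x)" using w(1) mu(3) by simp
  define s where "s = min 1 (\<beta>/\<mu>)"
  have "\<beta> < \<beta>/\<mu>" using m b by (simp add: field_simps)
  then have s: "\<beta> < s" "s \<le> 1" "s \<le> \<beta>/\<mu>" using b unfolding s_def by auto
  define k where "k = s * \<mu> / \<beta>"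
  have k: "0 \<le> k" "k \<le> 1" unfolding k_def using s m b by (auto simp: field_simps)
  have "s *\<^sub>R (v - x) = (s/\<beta>) *\<^sub>R (\<beta> *\<^sub>R (v - x))" using b by simp
  also have "\<dots> = k *\<^sub>R (y - x)" unfolding eq k_def by simp
  finally have "x + s *\<^sub>R (v - x) \<in> convex hull {x, y}" using k in_convex_hull_2_iff by metis
  then show ?thesis using s that by blast
qed

lemma crosses_side_at_exit:
  fixes x y u v :: pt
  assumes w: "u + \<beta> *\<^sub>R (v - u) \<in> convex hull {x, y}" "u + \<beta> *\<^sub>R (v - u) \<notin> P"
    and side: "convex hull {x, y} \<subseteq> Q" "x \<in> P" "y \<in> P"
    and leaves: "leaves_at u v Q \<beta>"
  shows "crosses {x, y} {u, v}"
proof -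
  define w where "w = u + \<beta> *\<^sub>R (v - u)"
  have b: "0 < \<beta>" "\<beta> < 1" and maxi: "\<And>s. \<beta> < s \<Longrightarrow> s \<le> 1 \<Longrightarrow> u + s *\<^sub>R (v - u) \<notin> Q"
    using leaves unfolding leaves_at_def by auto
  have wx: "w \<noteq> x" "w \<noteq> y" using w side unfolding w_def by auto
  have "v \<notin> Q" using maxi[of 1] b by simp
  then have "v \<noteq> x" "v \<noteq> y" using side(1) hull_inc[of x "{x, y}"] hull_inc[of y "{x, y}"] by auto
  moreover have "u \<noteq> x"
  proof
    assume "u = x"
    then obtain s where "\<beta> < s" "s \<le> 1" "u + s *\<^sub>R (v - u) \<in> convex hull {x, y}"
      using ray_beyond_segment_point[of w x \<beta> v y] w(1) wx b unfolding w_def by auto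
    then show False using maxi side(1) by blast
  qed
  moreover have "u \<noteq> y"
  proof
    assume "u = y"
    then obtain s where "\<beta> < s" "s \<le> 1" "u + s *\<^sub>R (v - u) \<in> convex hull {y, x}"
      using ray_beyond_segment_point[of w y \<beta> v x] w(1) wx b unfolding w_def
      by (auto simp: insert_commute)
    then show False using maxi side(1) by (auto simp: insert_commute)
  qed
  moreover have "w \<in> convex hull {u, v}"
    unfolding w_def in_convex_hull_2_iff using b by (intro exI[of _ \<beta>]) auto
  ultimately show ?thesis using w(1) unfolding crosses_def w_def by blast
qed

lemma triangle_interior_if_off_sides:
  fixes x1 x2 x3 w :: pt
  assumes ind: "\<not> affine_dependent {x1, x2, x3}" and d: "x1 \<noteq> x2" "x1 \<noteq> x3" "x2 \<noteq> x3"
    and w: "w \<in> convex hull {x1, x2, x3}"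
    and off: "w \<notin> convex hull {x1, x2}" "w \<notin> convex hull {x1, x3}" "w \<notin> convex hull {x2, x3}"
  shows "w \<in> interior (convex hull {x1, x2, x3})"
proof -
  obtain l1 l2 l3 where l: "w = l1 *\<^sub>R x1 + l2 *\<^sub>R x2 + l3 *\<^sub>R x3" "0 \<le> l1" "0 \<le> l2" "0 \<le> l3"
    "l1 + l2 + l3 = 1"
    using w unfolding convex_hull_3 by blast
  have "l3 \<noteq> 0" using off(1) l convex_hull_2_memI[of l1 l2 x1 x2] by auto
  moreover have "l2 \<noteq> 0" using off(2) l convex_hull_2_memI[of l1 l3 x1 x3] by auto
  moreover have "l1 \<noteq> 0" using off(3) l convex_hull_2_memI[of l2 l3 x2 x3] by auto
  ultimately have pos: "0 < l1" "0 < l2" "0 < l3" using l by auto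
  define U where "U = (\<lambda>x. if x = x1 then l1 else if x = x2 then l2 else l3)"
  have "\<forall>x\<in>{x1, x2, x3}. 0 < U x" using pos unfolding U_def by auto
  moreover have "sum U {x1, x2, x3} = 1" using d l(5) unfolding U_def by simp
  moreover have "(\<Sum>x\<in>{x1, x2, x3}. U x *\<^sub>R x) = w" using d l(1) unfolding U_def by simp
  ultimately show ?thesis
    using d unfolding interior_convex_hull_explicit_minimal[OF ind] by auto
qed

lemma crosses_triangle_side_at_exit:
  fixes x1 x2 x3 u v :: pt
  assumes ind: "\<not> affine_dependent {x1, x2, x3}" and d: "x1 \<noteq> x2" "x1 \<noteq> x3" "x2 \<noteq> x3"
    and tri: "convex hull {x1, x2, x3} \<subseteq> Q" "{x1, x2, x3} \<subseteq> P"
    and w: "u + \<beta> *\<^sub>R (v - u) \<in> convex hull {x1, x2, x3}" "u + \<beta> *\<^sub>R (v - u) \<notin> P"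
    and leaves: "leaves_at u v Q \<beta>" and uv: "u \<noteq> v"
  shows "crosses {x1, x2} {u, v} \<or> crosses {x1, x3} {u, v} \<or> crosses {x2, x3} {u, v}"
proof -
  have sides: "convex hull {x1, x2} \<subseteq> Q" "convex hull {x1, x3} \<subseteq> Q" "convex hull {x2, x3} \<subseteq> Q"
    using tri(1) hull_mono[of "{x1, x2}" "{x1, x2, x3}"] hull_mono[of "{x1, x3}" "{x1, x2, x3}"]
      hull_mono[of "{x2, x3}" "{x1, x2, x3}"] by (blast, blast, blast)
  have "u + \<beta> *\<^sub>R (v - u) \<notin> interior Q" using leaves_at_not_interior[OF leaves uv] .
  then have "u + \<beta> *\<^sub>R (v - u) \<notin> interior (convex hull {x1, x2, x3})"
    using interior_mono[OF tri(1)] by blast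
  then consider "u + \<beta> *\<^sub>R (v - u) \<in> convex hull {x1, x2}"
    | "u + \<beta> *\<^sub>R (v - u) \<in> convex hull {x1, x3}"
    | "u + \<beta> *\<^sub>R (v - u) \<in> convex hull {x2, x3}"
    using triangle_interior_if_off_sides[OF ind d w(1)] by blast
  then show ?thesis
  proof cases
    case 1
    then show ?thesis using crosses_side_at_exit[OF 1 w(2) sides(1) _ _ leaves] tri(2) by simp
  next
    case 2
    then show ?thesis using crosses_side_at_exit[OF 2 w(2) sides(2) _ _ leaves] tri(2) by simp
  next
    case 3
    then show ?thesis using crosses_side_at_exit[OF 3 w(2) sides(3) _ _ leaves] tri(2) by simp
  qed
qed

lemma crosses_quad_edge_at_exit:
  fixes u v a b c c' :: pt
  assumes T: "is_triangulation P T" and t: "{a, b, c} \<in> T" "{a, b, c'} \<in> T"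
    and leaves: "leaves_at u v (convex hull {a, b, c} \<union> convex hull {a, b, c'}) \<beta>"
    and w: "u + \<beta> *\<^sub>R (v - u) \<notin> P" and uv: "u \<noteq> v"
  shows "\<exists>y\<in>{{a, b}, {a, c}, {b, c}, {a, c'}, {b, c'}}. crosses y {u, v}"
proof -
  have "card {a, b, c} = 3" "card {a, b, c'} = 3"
    using triangulation_triangleD(2)[OF T t(1)] triangulation_triangleD(2)[OF T t(2)] by simp_all
  then have d: "a \<noteq> b" "a \<noteq> c" "b \<noteq> c" "a \<noteq> c'" "b \<noteq> c'"
    by (auto simp: card_insert_if split: if_splits)
  from leaves consider "u + \<beta> *\<^sub>R (v - u) \<in> convex hull {a, b, c}"
    | "u + \<beta> *\<^sub>R (v - u) \<in> convex hull {a, b, c'}"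
    unfolding leaves_at_def by blast
  then show ?thesis
  proof cases
    case 1
    then show ?thesis
      using crosses_triangle_side_at_exit[OF triangulation_triangleD(3)[OF T t(1)] d(1-3) Un_upper1
          triangulation_triangleD(1)[OF T t(1)] _ w leaves uv] by blast
  next
    case 2
    then show ?thesis
      using crosses_triangle_side_at_exit[OF triangulation_triangleD(3)[OF T t(2)] d(1,4,5) Un_upper2
          triangulation_triangleD(1)[OF T t(2)] _ w leaves uv] by blast
  qed
qed

lemma crosses_quad_edge_if_leaves_quad:
  fixes u v a b c c' :: pt
  assumes T: "is_triangulation P T" and t: "{a, b, c} \<in> T" "{a, b, c'} \<in> T"
    and Q: "convex_quad {a, b, c} {a, b, c'}"
    and uv: "u \<in> P" "u \<noteq> v" "P \<inter> convex hull {u, v} \<subseteq> {u, v}"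
    and cr: "crosses {u, v} {c, c'}"
    and v: "v \<notin> convex hull {a, b, c} \<union> convex hull {a, b, c'}"
  shows "\<exists>y\<in>{{a, b}, {a, c}, {b, c}, {a, c'}, {b, c'}}. crosses y {u, v}"
proof -
  define Qs where "Qs = convex hull {a, b, c} \<union> convex hull {a, b, c'}"
  have cq: "\<forall>p \<in> {a, b, c} \<union> {a, b, c'}. p \<notin> convex hull (({a, b, c} \<union> {a, b, c'}) - {p})"
    "convex Qs"
    using Q unfolding convex_quad_def Qs_def by blast+
  from cr obtain z where z: "z \<in> convex hull {u, v}" "z \<in> convex hull {c, c'}"
    and cuv: "{u, v} \<inter> {c, c'} = {}"
    unfolding crosses_def by blast
  have PQ: "x \<in> {a, b, c, c'}" if "x \<in> P" "x \<in> Qs" for x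
    using that triangulation_point_in_hull_face[OF T t(1) subset_refl]
      triangulation_point_in_hull_face[OF T t(2) subset_refl] unfolding Qs_def by blast
  have "{c, c'} \<subseteq> Qs" unfolding Qs_def by (auto intro: hull_inc)
  then have zQ: "z \<in> Qs" using z(2) cq(2) hull_minimal by blast
  obtain t0 where t0: "0 \<le> t0" "t0 \<le> 1" "z = u + t0 *\<^sub>R (v - u)"
    using z(1) in_convex_hull_2_iff by blast
  have "z \<noteq> u"
  proof
    assume zu: "z = u"
    then have "u \<in> {a, b, c, c'}" using PQ uv(1) zQ by blast
    then have "u \<in> {a, b, c} \<union> {a, b, c'}" by blast
    moreover have "convex hull {c, c'} \<subseteq> convex hull (({a, b, c} \<union> {a, b, c'}) - {u})"
      using cuv by (intro hull_mono) auto
    ultimately show False using cq(1) z(2) zu by blast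
  qed
  then have "0 < t0" using t0 by (cases "t0 = 0") auto
  moreover have "closed Qs" unfolding Qs_def by (intro closed_Un compact_imp_closed compact_convex_hull) auto
  ultimately obtain \<beta> where leaves: "leaves_at u v Qs \<beta>"
    using leaves_atE[of Qs t0 u v] t0 zQ v unfolding Qs_def by blast
  define w where "w = u + \<beta> *\<^sub>R (v - u)"
  have b: "0 < \<beta>" "\<beta> < 1" using leaves unfolding leaves_at_def w_def by auto
  have "w \<in> convex hull {u, v}" unfolding w_def in_convex_hull_2_iff using b by (intro exI[of _ \<beta>]) auto
  moreover have "w \<noteq> u" using b uv(2) unfolding w_def by simp
  moreover have "w \<noteq> v"
  proof
    assume "w = v"
    then have "(1 - \<beta>) *\<^sub>R (v - u) = 0" unfolding w_def by (auto simp: algebra_simps)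
    then show False using b uv(2) by simp
  qed
  ultimately have wP: "w \<notin> P" using uv(3) by blast
  then show ?thesis
    using crosses_quad_edge_at_exit[OF T t _ _ uv(2)] leaves unfolding w_def Qs_def by blast
qed

lemma crosses_quad_edge_if_crosses_diagonal:
  fixes a b c c' :: pt
  assumes T: "is_triangulation P T" and t: "{a, b, c} \<in> T" "{a, b, c'} \<in> T"
    and Q: "convex_quad {a, b, c} {a, b, c'}"
    and T0: "is_triangulation P T0" and e: "e \<in> edges T0"
    and cr: "crosses e {c, c'}" and ne: "e \<noteq> {a, b}"
  shows "\<exists>y\<in>{{a, b}, {a, c}, {b, c}, {a, c'}, {b, c'}}. crosses y e"
proof -
  obtain t0 where t0: "t0 \<in> T0" "e \<subseteq> t0" and "card e = 2" using e unfolding edges_def by blast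
  then obtain u v where uv: "e = {u, v}" "u \<noteq> v" by (meson card_2_iff)
  have P: "u \<in> P" "v \<in> P" using triangulation_triangleD(1)[OF T0 t0(1)] t0(2) uv(1) by auto
  have nopts: "P \<inter> convex hull {u, v} \<subseteq> {u, v}" "P \<inter> convex hull {v, u} \<subseteq> {v, u}"
    using triangulation_edge_hull_points[OF T0 e] uv(1) by (auto simp: insert_commute)
  have cuv: "{u, v} \<inter> {c, c'} = {}" using cr uv(1) unfolding crosses_def by blast
  let ?Q = "convex hull {a, b, c} \<union> convex hull {a, b, c'}"
  consider "v \<notin> ?Q" | "u \<notin> ?Q" | "u \<in> ?Q" "v \<in> ?Q" by blast
  then show ?thesis
  proof cases
    case 1
    then show ?thesis
      using crosses_quad_edge_if_leaves_quad[OF T t Q P(1) uv(2) nopts(1)] cr uv(1) by blast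
  next
    case 2
    have "crosses {v, u} {c, c'}" using cr uv(1) by (simp add: insert_commute)
    then show ?thesis
      using crosses_quad_edge_if_leaves_quad[OF T t Q P(2) uv(2)[symmetric] nopts(2)] 2 uv(1)
      by (simp add: insert_commute)
  next
    case 3
    then have "u \<in> {a, b}" "v \<in> {a, b}"
      using triangulation_point_in_hull_face[OF T t(1) subset_refl]
        triangulation_point_in_hull_face[OF T t(2) subset_refl] P cuv by blast+
    then have "e = {a, b}" using uv by auto
    then show ?thesis using ne by simp
  qed
qed

section \<open>Flips\<close>

lemma Tr_Suc:
  assumes "j < length F"
  shows "Tr T F (Suc j) = do_flip (Tr T F j) (eps F (Suc j))"
  using assms unfolding Tr_def eps_def by (simp add: take_Suc_conv_app_nth)

text \<open>That \<open>do_flip T g\<close> is again a triangulation shows that no third triangle contains \<open>g\<close>.\<close>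

lemma admissible_flipE:
  assumes T: "is_triangulation P T" and T': "is_triangulation P (do_flip T g)"
    and adm: "admissible T g"
  obtains a b c c' where "g = {a, b}" "a \<noteq> b" "{a, b, c} \<in> T" "{a, b, c'} \<in> T"
    "c \<notin> {a, b}" "c' \<notin> {a, b}" "c \<noteq> c'" "convex_quad {a, b, c} {a, b, c'}"
    "other_diag T g = {c, c'}"
proof -
  from adm obtain t1 t2 where "g \<in> edges T" and t: "t1 \<in> T" "t2 \<in> T" "t1 \<noteq> t2"
    "g \<subseteq> t1" "g \<subseteq> t2" "convex_quad t1 t2"
    unfolding admissible_def by blast
  then have g2: "card g = 2" unfolding edges_def by blast
  then obtain a b where ab: "g = {a, b}" "a \<noteq> b" by (meson card_2_iff)
  have c3: "card t1 = 3" "card t2 = 3" using triangulation_triangleD(2)[OF T] t(1,2) by auto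
  then have "finite t1" "finite t2" by (auto intro: card_ge_0_finite)
  then have "card (t1 - g) = 1" "card (t2 - g) = 1"
    using t(4,5) g2 c3 by (simp_all add: card_Diff_subset finite_subset)
  then obtain c c' where c: "t1 - g = {c}" and c': "t2 - g = {c'}" by (meson card_1_singletonE)
  have t1e: "t1 = {a, b, c}" using t(4) c ab(1) by blast
  have t2e: "t2 = {a, b, c'}" using t(5) c' ab(1) by blast
  have cab: "c \<notin> {a, b}" "c' \<notin> {a, b}" using c c' ab(1) by blast+
  have cc: "c \<noteq> c'" using t1e t2e t(3) by auto
  define D where "D = other_diag T g"
  have cD: "{c, c'} \<subseteq> D" unfolding D_def other_diag_def using t c c' by blast
  have "insert a D \<in> do_flip T g" unfolding do_flip_def D_def using ab(1) by blast
  then have D3: "card (insert a D) = 3" using triangulation_triangleD(2)[OF T'] by blast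
  then have fD: "finite D" using card_ge_0_finite[of "insert a D"] by simp
  moreover have "a \<notin> D" unfolding D_def other_diag_def using ab(1) by blast
  ultimately have "card D = card {c, c'}" using D3 cc by simp
  then have "D = {c, c'}" using card_subset_eq[OF fD cD] by simp
  then have "other_diag T g = {c, c'}" unfolding D_def .
  moreover have "{a, b, c} \<in> T" "{a, b, c'} \<in> T" "convex_quad {a, b, c} {a, b, c'}"
    using t(1,2,6) unfolding t1e t2e by simp_all
  ultimately show ?thesis using that ab cab cc by blast
qed

lemma edges_do_flip:
  assumes "{a, b, c} \<in> T" "{a, b, c'} \<in> T" "other_diag T {a, b} = {c, c'}" "c \<noteq> c'"
    and x: "x \<in> edges (do_flip T {a, b})"
  shows "x \<in> edges T \<or> x = {c, c'}"
proof -
  from x obtain t where t: "t \<in> do_flip T {a, b}" "x \<subseteq> t" and cx: "card x = 2"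
    unfolding edges_def by blast
  show ?thesis
  proof (cases "t \<in> T")
    case True then show ?thesis using t(2) cx unfolding edges_def by blast
  next
    case False
    then have "t \<in> (\<lambda>a'. insert a' {c, c'}) ` {a, b}"
      using t(1) assms(3) unfolding do_flip_def by simp
    then obtain a' where a': "a' \<in> {a, b}" "t = {a', c, c'}" by blast
    show ?thesis
    proof (cases "{c, c'} \<subseteq> x")
      case True
      moreover have "finite x" using cx card_ge_0_finite[of x] by simp
      ultimately show ?thesis using card_subset_eq[of x "{c, c'}"] cx assms(4) by simp
    next
      case False
      then have "x \<subseteq> {a, b, c} \<or> x \<subseteq> {a, b, c'}" using t(2) a' by blast
      then show ?thesis using assms(1,2) cx unfolding edges_def by blast
    qed
  qed
qed

lemma flipped_edge_notin_do_flip: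
  assumes "a \<noteq> b" "c \<notin> {a, b}" "c' \<notin> {a, b}" "other_diag T {a, b} = {c, c'}"
  shows "{a, b} \<notin> edges (do_flip T {a, b})"
proof
  assume "{a, b} \<in> edges (do_flip T {a, b})"
  then obtain t where t: "t \<in> do_flip T {a, b}" "{a, b} \<subseteq> t" unfolding edges_def by blast
  then have "t \<in> (\<lambda>a'. insert a' {c, c'}) ` {a, b}"
    using assms(4) unfolding do_flip_def by auto
  then obtain a' where "a' \<in> {a, b}" "t = {a', c, c'}" by blast
  then show False using t(2) assms(1-3) by auto
qed

lemma quad_edge_in_edges:
  assumes "{a, b, c} \<in> T" "{a, b, c'} \<in> T" "a \<noteq> b" "c \<notin> {a, b}" "c' \<notin> {a, b}"
    and y: "y \<in> {{a, b}, {a, c}, {b, c}, {a, c'}, {b, c'}}"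
  shows "y \<in> edges T" "y = {a, b} \<or> share_triangle T y {a, b}"
proof -
  have y2: "card y = 2" using y assms(3-5) by auto
  from y have "y \<subseteq> {a, b, c} \<or> y \<subseteq> {a, b, c'}" by auto
  then have t: "\<exists>t\<in>T. y \<subseteq> t \<and> {a, b} \<subseteq> t" using assms(1,2) by auto
  then show "y \<in> edges T" unfolding edges_def using y2 by blast
  show "y = {a, b} \<or> share_triangle T y {a, b}"
  proof (cases "y = {a, b}")
    case False
    then show ?thesis unfolding share_triangle_def using y2 t assms(3) by simp
  qed simp
qed

section \<open>Edges crossing a flipped edge\<close>

lemma valid_seq_triangulation:
  "valid_seq P T F \<Longrightarrow> j \<le> length F \<Longrightarrow> is_triangulation P (Tr T F j)"
  unfolding valid_seq_def by blast

lemma valid_seq_flipped_edge: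
  "valid_seq P T F \<Longrightarrow> 1 \<le> q \<Longrightarrow> q \<le> length F \<Longrightarrow> eps F q \<in> edges (Tr T F (q - 1))"
  unfolding valid_seq_def admissible_def by auto

lemma valid_seq_flipE:
  assumes V: "valid_seq P T F" and q: "1 \<le> q" "q \<le> length F"
  obtains a b c c' where "eps F q = {a, b}" "a \<noteq> b"
    "{a, b, c} \<in> Tr T F (q - 1)" "{a, b, c'} \<in> Tr T F (q - 1)"
    "c \<notin> {a, b}" "c' \<notin> {a, b}" "c \<noteq> c'" "convex_quad {a, b, c} {a, b, c'}"
    "other_diag (Tr T F (q - 1)) {a, b} = {c, c'}" "phi T F q = {c, c'}"
    "Tr T F q = do_flip (Tr T F (q - 1)) {a, b}"
proof -
  have step: "Tr T F q = do_flip (Tr T F (q - 1)) (eps F q)"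
    using Tr_Suc[of "q - 1" F T] q by simp
  have adm: "admissible (Tr T F (q - 1)) (eps F q)" using V q unfolding valid_seq_def by auto
  have tri: "is_triangulation P (Tr T F (q - 1))" using valid_seq_triangulation[OF V] q by simp
  have tri': "is_triangulation P (do_flip (Tr T F (q - 1)) (eps F q))"
    using valid_seq_triangulation[OF V q(2)] step by simp
  obtain a b c c' where f: "eps F q = {a, b}" "a \<noteq> b"
    "{a, b, c} \<in> Tr T F (q - 1)" "{a, b, c'} \<in> Tr T F (q - 1)"
    "c \<notin> {a, b}" "c' \<notin> {a, b}" "c \<noteq> c'" "convex_quad {a, b, c} {a, b, c'}"
    "other_diag (Tr T F (q - 1)) (eps F q) = {c, c'}"
    by (rule admissible_flipE[OF tri tri' adm])
  show ?thesis by (rule that) (use f step in \<open>simp_all add: phi_def\<close>)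
qed

lemma components_subset: "C \<in> components T F \<Longrightarrow> C \<subseteq> {1..length F}"
  unfolding components_def by auto

lemma components_arc_closed:
  assumes "C \<in> components T F" "p \<in> C" "(p, q) \<in> arcs T F"
  shows "q \<in> C"
proof -
  obtain i0 where C: "C = {j \<in> {1..length F}. (i0, j) \<in> (arcs T F \<union> (arcs T F)\<inverse>)\<^sup>*}"
    using assms(1) unfolding components_def by blast
  have "1 \<le> q" "q \<le> length F" using assms(3) unfolding arcs_def adjacent_def by auto
  moreover have "(i0, q) \<in> (arcs T F \<union> (arcs T F)\<inverse>)\<^sup>*"
    using assms(2,3) C by (blast intro: rtrancl_into_rtrancl)
  ultimately show ?thesis by (subst C) simp
qed

lemma rtrancl_Restr_mem: "(i, p) \<in> (Restr A C)\<^sup>* \<Longrightarrow> i \<in> C \<Longrightarrow> p \<in> C"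
  by (induction rule: rtrancl_induct) auto

lemma components_adjacent_Restr:
  assumes "C \<in> components T F" "i \<in> C" "(i, p) \<in> (Restr (arcs T F) C)\<^sup>*" "adjacent T F p q"
  shows "(p, q) \<in> Restr (arcs T F) C"
proof -
  have "p \<in> C" using rtrancl_Restr_mem[OF assms(3,2)] .
  moreover have "(p, q) \<in> arcs T F" using assms(4) unfolding arcs_def by simp
  ultimately show ?thesis using components_arc_closed[OF assms(1)] by blast
qed

definition last_created_by :: "triangulation \<Rightarrow> edge list \<Rightarrow> nat \<Rightarrow> nat \<Rightarrow> edge \<Rightarrow> bool" where
  "last_created_by T F p j x \<longleftrightarrow>
     1 \<le> p \<and> p \<le> j \<and> phi T F p = x \<and> (\<forall>r. p < r \<and> r \<le> j \<longrightarrow> eps F r \<noteq> x)"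

lemma last_created_by_self: "1 \<le> p \<Longrightarrow> last_created_by T F p p (phi T F p)"
  unfolding last_created_by_def by auto

lemma adjacent_if_last_created_by:
  assumes "last_created_by T F p (q - 1) y" "q \<le> length F"
    "y = eps F q \<or> share_triangle (Tr T F (q - 1)) y (eps F q)"
  shows "adjacent T F p q"
  using assms unfolding last_created_by_def adjacent_def by auto

definition crossings_reached :: "triangulation \<Rightarrow> edge list \<Rightarrow> nat set \<Rightarrow> nat \<Rightarrow> nat \<Rightarrow> bool" where
  "crossings_reached T F C i j \<longleftrightarrow>
     (\<forall>x \<in> edges (Tr T F j). crosses (eps F i) x \<longrightarrow>
        (\<exists>p. last_created_by T F p j x \<and> (i, p) \<in> (Restr (arcs T F) C)\<^sup>*))"

lemma crossings_reached_self:
  assumes V: "valid_seq P T F" and C: "C \<in> components T F" "i \<in> C"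
  shows "crossings_reached T F C i i"
  unfolding crossings_reached_def
proof (intro ballI impI)
  fix x assume x: "x \<in> edges (Tr T F i)" and cx: "crosses (eps F i) x"
  have i: "1 \<le> i" "i \<le> length F" using components_subset[OF C(1)] C(2) by auto
  obtain a b c c' where f: "eps F i = {a, b}" "a \<noteq> b"
    "{a, b, c} \<in> Tr T F (i - 1)" "{a, b, c'} \<in> Tr T F (i - 1)"
    "c \<notin> {a, b}" "c' \<notin> {a, b}" "c \<noteq> c'" "convex_quad {a, b, c} {a, b, c'}"
    "other_diag (Tr T F (i - 1)) {a, b} = {c, c'}" "phi T F i = {c, c'}"
    "Tr T F i = do_flip (Tr T F (i - 1)) {a, b}"
    by (rule valid_seq_flipE[OF V i])
  have "is_triangulation P (Tr T F (i - 1))" using valid_seq_triangulation[OF V] i by simp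
  then have "x \<notin> edges (Tr T F (i - 1))"
    using triangulation_edges_not_crosses valid_seq_flipped_edge[OF V i] cx by blast
  then have "x = phi T F i" using edges_do_flip[OF f(3,4,9,7)] x f(10,11) by auto
  then have "last_created_by T F i i x" using last_created_by_self i(1) by simp
  then show "\<exists>p. last_created_by T F p i x \<and> (i, p) \<in> (Restr (arcs T F) C)\<^sup>*" by blast
qed

lemma crossings_reached_Suc:
  assumes V: "valid_seq P T F" and C: "C \<in> components T F" "i \<in> C"
    and IH: "crossings_reached T F C i j" and j: "Suc j \<le> length F"
    and ne: "eps F (Suc j) \<noteq> eps F i"
  shows "crossings_reached T F C i (Suc j)"
  unfolding crossings_reached_def
proof (intro ballI impI)
  let ?R = "Restr (arcs T F) C"
  fix x assume x: "x \<in> edges (Tr T F (Suc j))" and cx: "crosses (eps F i) x"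
  obtain a b c c' where f: "eps F (Suc j) = {a, b}" "a \<noteq> b"
    "{a, b, c} \<in> Tr T F j" "{a, b, c'} \<in> Tr T F j"
    "c \<notin> {a, b}" "c' \<notin> {a, b}" "c \<noteq> c'" "convex_quad {a, b, c} {a, b, c'}"
    "other_diag (Tr T F j) {a, b} = {c, c'}" "phi T F (Suc j) = {c, c'}"
    "Tr T F (Suc j) = do_flip (Tr T F j) {a, b}"
    by (rule valid_seq_flipE[OF V _ j, unfolded diff_Suc_1]) simp
  from edges_do_flip[OF f(3,4,9,7)] x f(11) consider "x \<in> edges (Tr T F j)" | "x = {c, c'}"
    by auto
  then show "\<exists>p. last_created_by T F p (Suc j) x \<and> (i, p) \<in> ?R\<^sup>*"
  proof cases
    case 1
    then obtain p where p: "last_created_by T F p j x" "(i, p) \<in> ?R\<^sup>*"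
      using IH cx unfolding crossings_reached_def by blast
    have "x \<noteq> eps F (Suc j)" using x flipped_edge_notin_do_flip[OF f(2,5,6,9)] f(1,11) by auto
    then have "last_created_by T F p (Suc j) x"
      using p(1) unfolding last_created_by_def by (auto simp: le_Suc_eq)
    then show ?thesis using p(2) by blast
  next
    case 2
    have i: "1 \<le> i" "i \<le> length F" using components_subset[OF C(1)] C(2) by auto
    have "is_triangulation P (Tr T F j)" "is_triangulation P (Tr T F (i - 1))"
      using valid_seq_triangulation[OF V] i j by simp_all
    then obtain y where y: "y \<in> {{a, b}, {a, c}, {b, c}, {a, c'}, {b, c'}}" "crosses y (eps F i)"
      using crosses_quad_edge_if_crosses_diagonal[OF _ f(3,4,8) _ valid_seq_flipped_edge[OF V i]]
        cx 2 ne f(1) by auto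
    note yE = quad_edge_in_edges[OF f(3,4,2,5,6) y(1)]
    obtain p where p: "last_created_by T F p j y" "(i, p) \<in> ?R\<^sup>*"
      using IH yE(1) crosses_sym[OF y(2)] unfolding crossings_reached_def by blast
    have "adjacent T F p (Suc j)"
      using adjacent_if_last_created_by[of T F p "Suc j" y] p(1) j yE(2) f(1) by simp
    then have "(p, Suc j) \<in> ?R" using components_adjacent_Restr[OF C p(2)] by blast
    with p(2) have "(i, Suc j) \<in> ?R\<^sup>*" by (rule rtrancl_into_rtrancl)
    moreover have "last_created_by T F (Suc j) (Suc j) x"
      using last_created_by_self[of "Suc j" T F] f(10) 2 by simp
    ultimately show ?thesis by blast
  qed
qed

lemma crossings_reached:
  assumes V: "valid_seq P T F" and C: "C \<in> components T F" "i \<in> C"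
    and j: "i \<le> j" "j \<le> length F" and kept: "\<forall>r. i < r \<and> r \<le> j \<longrightarrow> eps F r \<noteq> eps F i"
  shows "crossings_reached T F C i j"
  using j kept
proof (induction j rule: nat_induct_at_least)
  case base
  show ?case by (rule crossings_reached_self[OF V C])
next
  case (Suc j)
  then show ?case using crossings_reached_Suc[OF V C] by simp
qed

theorem lemma4:
  fixes P :: "pt set" and Ti Tf :: triangulation and k :: nat and F :: "edge list"
    and C :: "nat set" and i h :: nat
  assumes "is_solution P Ti Tf k F"
    and "normalized Ti Tf F"
    and "C \<in> components Ti F"
    and "i \<in> C" and "h \<in> C" and "i < h"
    and "phi Ti F h = eps F i"
    and "\<forall>p. i < p \<and> p < h \<longrightarrow> eps F p \<noteq> eps F i"
  shows "(i, h) \<in> (Restr (arcs Ti F) C)\<^sup>+"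
proof -
  have V: "valid_seq P Ti F" using assms(1) unfolding is_solution_def by blast
  have h: "1 \<le> h" "h \<le> length F" using components_subset[OF assms(3)] assms(5) by auto
  obtain a b c c' where f: "eps F h = {a, b}" "a \<noteq> b"
    "{a, b, c} \<in> Tr Ti F (h - 1)" "{a, b, c'} \<in> Tr Ti F (h - 1)"
    "c \<notin> {a, b}" "c' \<notin> {a, b}" "c \<noteq> c'" "convex_quad {a, b, c} {a, b, c'}"
    "other_diag (Tr Ti F (h - 1)) {a, b} = {c, c'}" "phi Ti F h = {c, c'}"
    "Tr Ti F h = do_flip (Tr Ti F (h - 1)) {a, b}"
    by (rule valid_seq_flipE[OF V h])
  have "\<forall>r. i < r \<and> r \<le> h - 1 \<longrightarrow> eps F r \<noteq> eps F i" using assms(8) h(1) by auto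
  then have "crossings_reached Ti F C i (h - 1)"
    using crossings_reached[OF V assms(3,4), of "h - 1"] assms(6) h(2) by simp
  moreover have "{a, b} \<in> edges (Tr Ti F (h - 1))" using f(2,3) unfolding edges_def by auto
  moreover have "crosses (eps F i) {a, b}"
    using convex_quad_diagonals_cross[OF f(8,7,5,6)] assms(7) f(10) by simp
  ultimately obtain p where p: "last_created_by Ti F p (h - 1) {a, b}"
    "(i, p) \<in> (Restr (arcs Ti F) C)\<^sup>*"
    unfolding crossings_reached_def by blast
  have "adjacent Ti F p h" using adjacent_if_last_created_by[OF p(1) h(2)] f(1) by simp
  then have "(p, h) \<in> Restr (arcs Ti F) C" using components_adjacent_Restr[OF assms(3,4) p(2)] by blast
  with p(2) show ?thesis by (rule rtrancl_into_trancl1)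
qed

end
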